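(* Let $\lambda\in(\frac16,\frac56)$. There is a constant $C>0$ (depending only on $\lambda$) such that for every $n\ge0$ and all $x,y\in[0,1]$ with $x\notin\mathcal E$ and $\frac1{12}\ell_n(x)\le|x-y|\le\frac12\ell_n(x)$, $$|F^\lambda(x)-F^\lambda(y)|\le C(|m_n(x)|+1)|x-y|.$$
   Context: Construction: $F^\lambda_0\equiv0$ on $[0,1]$. Given $F^\lambda_n$ with its $4^n$ closed intervals of generation $n$ (covering $[0,1]$, disjoint interiors, $F^\lambda_n$ affine on each), on each interval $[a,b]$ of generation $n$, with $\ell=b-a$ and slope $m$, $F^\lambda_{n+1}$ coincides with $F^\lambda_n$ at $a,a+\ell/3,a+2\ell/3,b$, equals $F^\lambda_n(a+\ell/2)+\lambda\ell\sqrt{1+m^2}$ at $a+\ell/2$, and is affine on $[a,a+\ell/3],[a+\ell/3,a+\ell/2],[a+\ell/2,a+2\ell/3],[a+2\ell/3,b]$. $F^\lambda=\lim_nF^\lambda_n$ (finite for $\lambda\in(\frac16,\frac56)$). Dynamics: $T(x)=3x$ on $[0,\frac13)$, $6x-2$ on $[\frac13,\frac12)$, $4-6x$ on $[\frac12,\frac23)$, $3x-2$ on $[\frac23,1]$; $U(x)=0,1,2,3$ on these intervals respectively; $u_n(x)=U(T^nx)$; $\beta_{0,3}(x,n)=\#\{k<n:u_k(x)\in\{0,3\}\}$, $\beta_{1,2}(x,n)=\#\{k<n:u_k(x)\in\{1,2\}\}$; $\ell_n(x)=3^{-\beta_{0,3}(x,n)}6^{-\beta_{1,2}(x,n)}$.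 $\mathcal E$ is the set of $x$ whose digit sequence $(u_n(x))$ is eventually constantly $0$ or eventually constantly $3$; for $x\notin\mathcal E$, $m_n(x)$ is the slope of $F^\lambda_n$ at $x$. *)

theory Defs
  imports Complex_Main
begin

text \<open>A piece of generation n is a quadruple (a, b, F_n(a), F_n(b)); F_n is affine on [a,b].\<close>

definition refine :: "real \<Rightarrow> real \<times> real \<times> real \<times> real \<Rightarrow> (real \<times> real \<times> real \<times> real) list" where
  "refine lam p = (case p of (a, b, fa, fb) \<Rightarrow>
     let l = b - a; m = (fb - fa) / l;
         v1 = fa + m * l / 3; v2 = fa + 2 * m * l / 3;
         mid = fa + m * l / 2 + lam * l * sqrt (1 + m\<^sup>2)
     in [(a, a + l/3, fa, v1), (a + l/3, a + l/2, v1, mid),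
         (a + l/2, a + 2*l/3, mid, v2), (a + 2*l/3, b, v2, fb)])"

primrec pieces :: "real \<Rightarrow> nat \<Rightarrow> (real \<times> real \<times> real \<times> real) list" where
  "pieces lam 0 = [(0, 1, 0, 0)]"
| "pieces lam (Suc n) = concat (map (refine lam) (pieces lam n))"

definition piece_at :: "real \<Rightarrow> nat \<Rightarrow> real \<Rightarrow> (real \<times> real \<times> real \<times> real) option" where
  "piece_at lam n x = find (\<lambda>(a, b, _, _). a \<le> x \<and> x \<le> b) (pieces lam n)"

definition Fn :: "real \<Rightarrow> nat \<Rightarrow> real \<Rightarrow> real" where
  "Fn lam n x = (case piece_at lam n x of
      Some (a, b, fa, fb) \<Rightarrow> fa + (fb - fa) / (b - a) * (x - a)
    | None \<Rightarrow> 0)"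

definition slope_n :: "real \<Rightarrow> nat \<Rightarrow> real \<Rightarrow> real" where
  "slope_n lam n x = (case piece_at lam n x of
      Some (a, b, fa, fb) \<Rightarrow> (fb - fa) / (b - a)
    | None \<Rightarrow> 0)"

definition Flim :: "real \<Rightarrow> real \<Rightarrow> real" where
  "Flim lam x = lim (\<lambda>n. Fn lam n x)"

definition Tmap :: "real \<Rightarrow> real" where
  "Tmap x = (if x < 1/3 then 3 * x else if x < 1/2 then 6 * x - 2
             else if x < 2/3 then 4 - 6 * x else 3 * x - 2)"

definition Umap :: "real \<Rightarrow> nat" where
  "Umap x = (if x < 1/3 then 0 else if x < 1/2 then 1 else if x < 2/3 then 2 else 3)"

definition digit :: "nat \<Rightarrow> real \<Rightarrow> nat" where
  "digit n x = Umap ((Tmap ^^ n) x)"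

definition beta03 :: "real \<Rightarrow> nat \<Rightarrow> nat" where
  "beta03 x n = card {k. k < n \<and> digit k x \<in> {0, 3}}"

definition beta12 :: "real \<Rightarrow> nat \<Rightarrow> nat" where
  "beta12 x n = card {k. k < n \<and> digit k x \<in> {1, 2}}"

definition ell :: "nat \<Rightarrow> real \<Rightarrow> real" where
  "ell n x = (1/3) ^ beta03 x n * (1/6) ^ beta12 x n"

definition Eset :: "real set" where
  "Eset = {x. \<exists>N. (\<forall>k\<ge>N. digit k x = 0) \<or> (\<forall>k\<ge>N. digit k x = 3)}"

end

(*
  Refining a piece adds a tent of height lam times
  the length of its chord, and the chord of a child is at most (1 + 6 lam)/6 < 1 times that of
  its parent; summing the geometric series, F^lam stays within a constant multiple of
  |P| (|m_P| + 1) of the affine function of P.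

  For x outside E the generation-n piece containing x is the cylinder of the first n digits of x,
  so x lies in its interior and its length is ell_n(x). A point y with |x - y| <= ell_n(x)/2 lies
  in that piece or in one of its two neighbours, and neighbouring pieces have lengths within a
  factor 2 and weights |m| + 1 within a factor depending only on lam (here lam > 1/6 is used).
  Together with |x - y| >= ell_n(x)/12 this gives the estimate.
*)

theory Submission
  imports Defs
begin

section \<open>Pieces and their refinement\<close>

type_synonym piece = "real \<times> real \<times> real \<times> real"

definition piece_left :: "piece \<Rightarrow> real" where "piece_left p = fst p"
definition piece_right :: "piece \<Rightarrow> real" where "piece_right p = fst (snd p)"
definition piece_lval :: "piece \<Rightarrow> real" where "piece_lval p = fst (snd (snd p))"
definition piece_rval :: "piece \<Rightarrow> real" where "piece_rval p = snd (snd (snd p))"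

definition piece_len :: "piece \<Rightarrow> real" where "piece_len p = piece_right p - piece_left p"
definition piece_slope :: "piece \<Rightarrow> real" where
  "piece_slope p = (piece_rval p - piece_lval p) / piece_len p"

text \<open>The length of the graph of \<open>p\<close>; refinement raises the midpoint of \<open>p\<close> by \<open>lam\<close> times it.\<close>
definition piece_chord :: "piece \<Rightarrow> real" where
  "piece_chord p = piece_len p * sqrt (1 + (piece_slope p)\<^sup>2)"

definition piece_fun :: "piece \<Rightarrow> real \<Rightarrow> real" where
  "piece_fun p z = piece_lval p + piece_slope p * (z - piece_left p)"

definition in_piece :: "piece \<Rightarrow> real \<Rightarrow> bool" where
  "in_piece p z \<longleftrightarrow> piece_left p \<le> z \<and> z \<le> piece_right p"

definition tent :: "piece \<Rightarrow> real \<Rightarrow> real" where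
  "tent p z =
     (let a = piece_left p; l = piece_len p in
      if z \<le> a + l / 3 then 0
      else if z \<le> a + l / 2 then 6 * (z - a - l / 3) / l
      else if z \<le> a + 2 * l / 3 then 6 * (a + 2 * l / 3 - z) / l
      else 0)"

lemma piece_simps [simp]:
  "piece_left (a, b, fa, fb) = a" "piece_right (a, b, fa, fb) = b"
  "piece_lval (a, b, fa, fb) = fa" "piece_rval (a, b, fa, fb) = fb"
  by (simp_all add: piece_left_def piece_right_def piece_lval_def piece_rval_def)

definition child0 :: "piece \<Rightarrow> piece" where
  "child0 p = (piece_left p, piece_left p + piece_len p / 3,
     piece_lval p, piece_lval p + piece_slope p * piece_len p / 3)"

definition child1 :: "real \<Rightarrow> piece \<Rightarrow> piece" where
  "child1 lam p = (piece_left p + piece_len p / 3, piece_left p + piece_len p / 2,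
     piece_lval p + piece_slope p * piece_len p / 3,
     piece_lval p + piece_slope p * piece_len p / 2 + lam * piece_chord p)"

definition child2 :: "real \<Rightarrow> piece \<Rightarrow> piece" where
  "child2 lam p = (piece_left p + piece_len p / 2, piece_left p + 2 * piece_len p / 3,
     piece_lval p + piece_slope p * piece_len p / 2 + lam * piece_chord p,
     piece_lval p + 2 * piece_slope p * piece_len p / 3)"

definition child3 :: "piece \<Rightarrow> piece" where
  "child3 p = (piece_left p + 2 * piece_len p / 3, piece_right p,
     piece_lval p + 2 * piece_slope p * piece_len p / 3, piece_rval p)"

lemma refine_eq_children: "refine lam p = [child0 p, child1 lam p, child2 lam p, child3 p]"
proof -
  obtain a b fa fb where p: "p = (a, b, fa, fb)" by (cases p) auto
  show ?thesis
    unfolding p refine_def child0_def child1_def child2_def child3_def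
      piece_chord_def piece_len_def piece_slope_def
    by (simp only: Let_def prod.case piece_simps mult.assoc)
qed

lemma mem_refine_iff:
  "c \<in> set (refine lam p) \<longleftrightarrow> c = child0 p \<or> c = child1 lam p \<or> c = child2 lam p \<or> c = child3 p"
  by (auto simp: refine_eq_children)

lemma piece_right_eq: "piece_right p = piece_left p + piece_len p"
  by (simp add: piece_len_def)

lemma piece_rval_eq: "piece_len p \<noteq> 0 \<Longrightarrow> piece_rval p = piece_lval p + piece_slope p * piece_len p"
  by (simp add: piece_slope_def)

lemma children_simps [simp]:
  "piece_left (child0 p) = piece_left p"
  "piece_right (child0 p) = piece_left p + piece_len p / 3"
  "piece_lval (child0 p) = piece_lval p"
  "piece_rval (child0 p) = piece_lval p + piece_slope p * piece_len p / 3"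
  "piece_left (child1 lam p) = piece_left p + piece_len p / 3"
  "piece_right (child1 lam p) = piece_left p + piece_len p / 2"
  "piece_lval (child1 lam p) = piece_lval p + piece_slope p * piece_len p / 3"
  "piece_rval (child1 lam p) = piece_lval p + piece_slope p * piece_len p / 2 + lam * piece_chord p"
  "piece_left (child2 lam p) = piece_left p + piece_len p / 2"
  "piece_right (child2 lam p) = piece_left p + 2 * piece_len p / 3"
  "piece_lval (child2 lam p) = piece_lval p + piece_slope p * piece_len p / 2 + lam * piece_chord p"
  "piece_rval (child2 lam p) = piece_lval p + 2 * piece_slope p * piece_len p / 3"
  "piece_left (child3 p) = piece_left p + 2 * piece_len p / 3"
  "piece_right (child3 p) = piece_right p"
  "piece_lval (child3 p) = piece_lval p + 2 * piece_slope p * piece_len p / 3"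
  "piece_rval (child3 p) = piece_rval p"
  by (simp_all add: child0_def child1_def child2_def child3_def)

lemma children_len [simp]:
  "piece_len (child0 p) = piece_len p / 3" "piece_len (child1 lam p) = piece_len p / 6"
  "piece_len (child2 lam p) = piece_len p / 6" "piece_len (child3 p) = piece_len p / 3"
  by (simp_all add: piece_len_def[of "child0 p"] piece_len_def[of "child1 lam p"]
      piece_len_def[of "child2 lam p"] piece_len_def[of "child3 p"]) (simp_all add: piece_len_def)

lemma children_slope [simp]:
  assumes "piece_len p > 0"
  shows "piece_slope (child0 p) = piece_slope p"
    "piece_slope (child1 lam p) = piece_slope p + 6 * lam * sqrt (1 + (piece_slope p)\<^sup>2)"
    "piece_slope (child2 lam p) = piece_slope p - 6 * lam * sqrt (1 + (piece_slope p)\<^sup>2)"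
    "piece_slope (child3 p) = piece_slope p"
  using assms
  by (simp_all add: piece_slope_def[of "child0 p"] piece_slope_def[of "child1 lam p"]
      piece_slope_def[of "child2 lam p"] piece_slope_def[of "child3 p"]
      piece_rval_eq piece_chord_def field_simps)

lemma children_fun:
  assumes "piece_len p > 0"
  shows "piece_fun (child0 p) z = piece_fun p z"
    "piece_fun (child1 lam p) z =
       piece_fun p z + 6 * lam * sqrt (1 + (piece_slope p)\<^sup>2) * (z - piece_left p - piece_len p / 3)"
    "piece_fun (child2 lam p) z =
       piece_fun p z + 6 * lam * sqrt (1 + (piece_slope p)\<^sup>2) * (piece_left p + 2 * piece_len p / 3 - z)"
    "piece_fun (child3 p) z = piece_fun p z"
  using assms by (simp_all add: piece_fun_def piece_chord_def algebra_simps)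

lemma child_fun:
  assumes "piece_len p > 0" "c \<in> set (refine lam p)" "in_piece c z"
  shows "piece_fun c z = piece_fun p z + lam * piece_chord p * tent p z"
  using assms unfolding mem_refine_iff
  by (auto simp: children_fun in_piece_def tent_def Let_def) (simp_all add: piece_chord_def field_simps)

lemma tent_bounds:
  assumes "piece_len p > 0"
  shows "0 \<le> tent p z" "tent p z \<le> 1"
  using assms by (auto simp: tent_def Let_def field_simps)

lemma tent_ends:
  assumes "piece_len p > 0"
  shows "tent p (piece_left p) = 0" "tent p (piece_right p) = 0"
  using assms by (auto simp: tent_def Let_def piece_right_eq)

lemma child_within:
  assumes "piece_len p > 0" "c \<in> set (refine lam p)"
  shows "piece_left p \<le> piece_left c" "piece_right c \<le> piece_right p" "piece_len c > 0"
  using assms unfolding mem_refine_iff by (auto simp: piece_right_eq)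

lemma children_cover:
  assumes "piece_len p > 0" "in_piece p z"
  shows "\<exists>c\<in>set (refine lam p). in_piece c z"
  using assms unfolding refine_eq_children in_piece_def piece_right_eq
  by (cases "z \<le> piece_left p + piece_len p / 3"; cases "z \<le> piece_left p + piece_len p / 2";
      cases "z \<le> piece_left p + 2 * piece_len p / 3") auto

lemma children_disjoint:
  assumes "piece_len p > 0" "c \<in> set (refine lam p)" "c' \<in> set (refine lam p)" "c \<noteq> c'"
  shows "piece_right c \<le> piece_left c' \<or> piece_right c' \<le> piece_left c"
  using assms unfolding mem_refine_iff by (auto simp: piece_right_eq)

lemma sqrt_one_plus_square_bounds:
  fixes m :: real
  shows "\<bar>m\<bar> \<le> sqrt (1 + m\<^sup>2)" "1 \<le> sqrt (1 + m\<^sup>2)" "sqrt (1 + m\<^sup>2) \<le> \<bar>m\<bar> + 1"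
proof -
  show "\<bar>m\<bar> \<le> sqrt (1 + m\<^sup>2)" by (rule real_le_rsqrt) simp
  show "1 \<le> sqrt (1 + m\<^sup>2)" by simp
  show "sqrt (1 + m\<^sup>2) \<le> \<bar>m\<bar> + 1" using sqrt_sum_squares_le_sum_abs[of 1 m] by simp
qed

lemma sqrt_one_plus_square_add_le:
  fixes m t :: real
  shows "sqrt (1 + (m + t)\<^sup>2) \<le> sqrt (1 + m\<^sup>2) + \<bar>t\<bar>"
  using real_sqrt_sum_squares_triangle_ineq[of 1 0 m t] by simp

definition chord_ratio :: "real \<Rightarrow> real" where
  "chord_ratio lam = (1 + 6 * lam) / 6"

lemma child_chord_le:
  assumes lam: "1/6 \<le> lam" and len: "piece_len p > 0" and c: "c \<in> set (refine lam p)"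
  shows "piece_chord c \<le> chord_ratio lam * piece_chord p"
proof -
  define S where "S = sqrt (1 + (piece_slope p)\<^sup>2)"
  have S1: "1 \<le> S" unfolding S_def by (rule sqrt_one_plus_square_bounds)
  have bumped: "sqrt (1 + (piece_slope p + t)\<^sup>2) \<le> (1 + 6 * lam) * S" if "\<bar>t\<bar> = 6 * lam * S" for t
    using sqrt_one_plus_square_add_le[of "piece_slope p" t] that by (simp add: S_def algebra_simps)
  have outer: "piece_len p / 3 * S \<le> chord_ratio lam * (piece_len p * S)"
    using lam len S1 by (simp add: chord_ratio_def field_simps)
  have inner: "piece_len p / 6 * sqrt (1 + (piece_slope p + t)\<^sup>2) \<le> chord_ratio lam * (piece_len p * S)"
    if "\<bar>t\<bar> = 6 * lam * S" for t
    using mult_left_mono[OF bumped[OF that], of "piece_len p / 6"] len by (simp add: chord_ratio_def)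
  have "\<bar>6 * lam * S\<bar> = 6 * lam * S" "\<bar>- (6 * lam * S)\<bar> = 6 * lam * S" using lam S1 by auto
  from inner[OF this(1)] inner[OF this(2)] outer show ?thesis
    using c len unfolding mem_refine_iff by (auto simp: piece_chord_def S_def)
qed

lemma bumped_slope_le:
  fixes lam m s :: real
  assumes "0 \<le> lam" "\<bar>s - m\<bar> \<le> 6 * lam * sqrt (1 + m\<^sup>2)"
  shows "\<bar>s\<bar> + 1 \<le> (1 + 6 * lam) * (\<bar>m\<bar> + 1)"
proof -
  have "6 * lam * sqrt (1 + m\<^sup>2) \<le> 6 * lam * (\<bar>m\<bar> + 1)"
    using assms(1) sqrt_one_plus_square_bounds(3)[of m] by (simp add: mult_left_mono)
  then show ?thesis using assms(2) abs_triangle_ineq2[of s m] by (simp add: algebra_simps)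
qed

text \<open>This is where \<open>1/6 < lam\<close> is needed: a bump of the slope then dominates \<open>\<bar>m\<bar>\<close>.\<close>
lemma le_bumped_slope:
  fixes lam m s :: real
  assumes "1/6 < lam" "6 * lam * sqrt (1 + m\<^sup>2) \<le> \<bar>s - m\<bar>"
  shows "\<bar>m\<bar> + 1 \<le> (1 + 1 / (6 * lam - 1)) * (\<bar>s\<bar> + 1)"
proof -
  have "6 * lam * \<bar>m\<bar> \<le> 6 * lam * sqrt (1 + m\<^sup>2)"
    using assms(1) sqrt_one_plus_square_bounds(1)[of m] by (simp add: mult_left_mono)
  then have "(6 * lam - 1) * \<bar>m\<bar> \<le> \<bar>s\<bar>"
    using assms(2) abs_triangle_ineq4[of s m] by (simp add: algebra_simps)
  then have "\<bar>m\<bar> \<le> \<bar>s\<bar> / (6 * lam - 1)" using assms(1) by (simp add: field_simps)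
  moreover have "0 \<le> 1 / (6 * lam - 1)" using assms(1) by simp
  moreover have "(1 + 1 / (6 * lam - 1)) * (\<bar>s\<bar> + 1) = \<bar>s\<bar> + 1 + \<bar>s\<bar> / (6 * lam - 1) + 1 / (6 * lam - 1)"
    by (simp add: algebra_simps add_divide_distrib)
  ultimately show ?thesis by linarith
qed

definition slope_ratio :: "real \<Rightarrow> real" where
  "slope_ratio lam = (1 + 6 * lam) * (1 + 1 / (6 * lam - 1))"

lemma slope_ratio_ge_one: "1/6 < lam \<Longrightarrow> 1 \<le> slope_ratio lam"
  unfolding slope_ratio_def by (rule order_trans[OF _ mult_mono[of 1 _ 1]]) auto

definition comparable :: "real \<Rightarrow> piece \<Rightarrow> piece \<Rightarrow> bool" where
  "comparable K p q \<longleftrightarrow>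
     piece_len q \<le> 2 * piece_len p \<and> piece_len p \<le> 2 * piece_len q \<and>
     \<bar>piece_slope q\<bar> + 1 \<le> K * (\<bar>piece_slope p\<bar> + 1) \<and>
     \<bar>piece_slope p\<bar> + 1 \<le> K * (\<bar>piece_slope q\<bar> + 1)"

lemma comparable_sym: "comparable K p q \<Longrightarrow> comparable K q p"
  by (auto simp: comparable_def)

lemma bumped_slopes_comparable:
  fixes lam m a b :: real
  defines "t \<equiv> 6 * lam * sqrt (1 + m\<^sup>2)"
  assumes lam: "1/6 < lam" and a: "a \<in> {m, m + t, m - t}" and b: "b \<in> {m, m + t, m - t}"
  shows "\<bar>a\<bar> + 1 \<le> slope_ratio lam * (\<bar>b\<bar> + 1)"
proof -
  define A where "A = 1 + 6 * lam"
  define B where "B = 1 + 1 / (6 * lam - 1)"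
  have "0 \<le> t" using lam by (simp add: t_def)
  have "\<bar>a\<bar> + 1 \<le> A * (\<bar>m\<bar> + 1)"
  proof (cases "a = m")
    case True
    then show ?thesis using lam mult_right_mono[of 1 A "\<bar>m\<bar> + 1"] by (simp add: A_def)
  next
    case False
    then have "\<bar>a - m\<bar> = t" using a \<open>0 \<le> t\<close> by auto
    then show ?thesis using bumped_slope_le[of lam a m] lam by (simp add: A_def t_def)
  qed
  also have "\<dots> \<le> A * (B * (\<bar>b\<bar> + 1))"
  proof (intro mult_left_mono)
    show "\<bar>m\<bar> + 1 \<le> B * (\<bar>b\<bar> + 1)"
    proof (cases "b = m")
      case True
      then show ?thesis using lam mult_right_mono[of 1 B "\<bar>m\<bar> + 1"] by (simp add: B_def)
    next
      case False
      then have "\<bar>b - m\<bar> = t" using b \<open>0 \<le> t\<close> by auto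
      then show ?thesis using le_bumped_slope[of lam m b] lam by (simp add: B_def t_def)
    qed
  qed (use lam in \<open>simp add: A_def\<close>)
  finally show ?thesis by (simp add: slope_ratio_def A_def B_def mult.assoc)
qed

lemma adjacent_children_comparable:
  assumes lam: "1/6 < lam" and len: "piece_len p > 0"
    and c: "c \<in> set (refine lam p)" "c' \<in> set (refine lam p)" "piece_right c = piece_left c'"
  shows "comparable (slope_ratio lam) c c'"
proof -
  have "c = child0 p \<and> c' = child1 lam p \<or> c = child1 lam p \<and> c' = child2 lam p \<or>
      c = child2 lam p \<and> c' = child3 p"
    using c len unfolding mem_refine_iff by (auto simp: piece_right_eq)
  then show ?thesis
    using len bumped_slopes_comparable[OF lam, where m = "piece_slope p"] unfolding comparable_def by auto
qed

section \<open>The pieces of generation \<open>n\<close>\<close>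

lemma pieces_in_unit:
  assumes "p \<in> set (pieces lam n)"
  shows "0 \<le> piece_left p" "piece_right p \<le> 1" "0 < piece_len p"
proof -
  have "0 \<le> piece_left p \<and> piece_right p \<le> 1 \<and> 0 < piece_len p"
    using assms
  proof (induction n arbitrary: p)
    case 0
    then show ?case by (auto simp: piece_len_def)
  next
    case (Suc n)
    then obtain q where q: "q \<in> set (pieces lam n)" "p \<in> set (refine lam q)" by auto
    with Suc.IH have "0 \<le> piece_left q" "piece_right q \<le> 1" "0 < piece_len q" by auto
    with child_within[OF _ q(2)] show ?case by fastforce
  qed
  then show "0 \<le> piece_left p" "piece_right p \<le> 1" "0 < piece_len p" by auto
qed

lemma pieces_SucE:
  assumes "c \<in> set (pieces lam (Suc n))"
  obtains p where "p \<in> set (pieces lam n)" "c \<in> set (refine lam p)" "piece_len p > 0"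
  using assms pieces_in_unit(3) by auto

lemma pieces_disjoint:
  assumes "p \<in> set (pieces lam n)" "q \<in> set (pieces lam n)" "p \<noteq> q"
  shows "piece_right p \<le> piece_left q \<or> piece_right q \<le> piece_left p"
  using assms
proof (induction n arbitrary: p q)
  case 0
  then show ?case by simp
next
  case (Suc n)
  obtain p' where p': "p' \<in> set (pieces lam n)" "p \<in> set (refine lam p')" "piece_len p' > 0"
    using Suc.prems(1) by (rule pieces_SucE)
  obtain q' where q': "q' \<in> set (pieces lam n)" "q \<in> set (refine lam q')" "piece_len q' > 0"
    using Suc.prems(2) by (rule pieces_SucE)
  show ?case
  proof (cases "p' = q'")
    case True
    then show ?thesis using children_disjoint[OF p'(3,2)] q'(2) Suc.prems(3) by auto
  next
    case False
    then show ?thesis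
      using Suc.IH[OF p'(1) q'(1)] child_within[OF p'(3,2)] child_within[OF q'(3,2)] by auto
  qed
qed

lemma pieces_agree:
  assumes "p \<in> set (pieces lam n)" "q \<in> set (pieces lam n)" "in_piece p z" "in_piece q z"
  shows "piece_fun p z = piece_fun q z"
  using assms
proof (induction n arbitrary: p q)
  case 0
  then show ?case by simp
next
  case (Suc n)
  obtain p' where p': "p' \<in> set (pieces lam n)" "p \<in> set (refine lam p')" "piece_len p' > 0"
    using Suc.prems(1) by (rule pieces_SucE)
  obtain q' where q': "q' \<in> set (pieces lam n)" "q \<in> set (refine lam q')" "piece_len q' > 0"
    using Suc.prems(2) by (rule pieces_SucE)
  have z: "in_piece p' z" "in_piece q' z"
    using child_within[OF p'(3,2)] child_within[OF q'(3,2)] Suc.prems(3,4) by (auto simp: in_piece_def)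
  have "piece_fun p z = piece_fun p' z + lam * piece_chord p' * tent p' z"
    "piece_fun q z = piece_fun q' z + lam * piece_chord q' * tent q' z"
    using child_fun[OF p'(3,2)] child_fun[OF q'(3,2)] Suc.prems(3,4) by auto
  moreover have "tent p' z = 0 \<and> tent q' z = 0" if "p' \<noteq> q'"
  proof -
    have "z = piece_right p' \<and> z = piece_left q' \<or> z = piece_right q' \<and> z = piece_left p'"
      using pieces_disjoint[OF p'(1) q'(1) that] z by (auto simp: in_piece_def)
    then show ?thesis using tent_ends[OF p'(3)] tent_ends[OF q'(3)] by auto
  qed
  ultimately show ?case using Suc.IH[OF p'(1) q'(1) z] by (cases "p' = q'") auto
qed

lemma pieces_right_neighbour:
  assumes "p \<in> set (pieces lam n)" "piece_right p < 1"
  shows "\<exists>q\<in>set (pieces lam n). piece_left q = piece_right p"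
  using assms
proof (induction n arbitrary: p)
  case 0
  then show ?case by simp
next
  case (Suc n)
  obtain p' where p': "p' \<in> set (pieces lam n)" "p \<in> set (refine lam p')" "piece_len p' > 0"
    using Suc.prems(1) by (rule pieces_SucE)
  have siblings: "set (refine lam p') \<subseteq> set (pieces lam (Suc n))" using p'(1) by auto
  show ?case
  proof (cases "p = child3 p'")
    case True
    then obtain q where q: "q \<in> set (pieces lam n)" "piece_left q = piece_right p'"
      using Suc.IH[OF p'(1)] Suc.prems(2) by auto
    then have "child0 q \<in> set (pieces lam (Suc n))" by (auto simp: refine_eq_children)
    with q True show ?thesis by (intro bexI[of _ "child0 q"]) auto
  next
    case False
    then have "\<exists>c\<in>set (refine lam p'). piece_left c = piece_right p"
      using p'(2) unfolding mem_refine_iff by (auto simp: refine_eq_children)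
    with siblings show ?thesis by blast
  qed
qed

lemma pieces_left_neighbour:
  assumes "p \<in> set (pieces lam n)" "0 < piece_left p"
  shows "\<exists>q\<in>set (pieces lam n). piece_right q = piece_left p"
  using assms
proof (induction n arbitrary: p)
  case 0
  then show ?case by simp
next
  case (Suc n)
  obtain p' where p': "p' \<in> set (pieces lam n)" "p \<in> set (refine lam p')" "piece_len p' > 0"
    using Suc.prems(1) by (rule pieces_SucE)
  have siblings: "set (refine lam p') \<subseteq> set (pieces lam (Suc n))" using p'(1) by auto
  show ?case
  proof (cases "p = child0 p'")
    case True
    then obtain q where q: "q \<in> set (pieces lam n)" "piece_right q = piece_left p'"
      using Suc.IH[OF p'(1)] Suc.prems(2) by auto
    then have "child3 q \<in> set (pieces lam (Suc n))" by (auto simp: refine_eq_children)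
    with q True show ?thesis by (intro bexI[of _ "child3 q"]) auto
  next
    case False
    then have "\<exists>c\<in>set (refine lam p'). piece_right c = piece_left p"
      using p'(2) unfolding mem_refine_iff by (auto simp: refine_eq_children)
    with siblings show ?thesis by blast
  qed
qed

lemma adjacent_pieces_comparable:
  assumes lam: "1/6 < lam"
    and "p \<in> set (pieces lam n)" "q \<in> set (pieces lam n)" "piece_right p = piece_left q"
  shows "comparable (slope_ratio lam) p q"
  using assms(2-)
proof (induction n arbitrary: p q)
  case 0
  then show ?case by simp
next
  case (Suc n)
  obtain p' where p': "p' \<in> set (pieces lam n)" "p \<in> set (refine lam p')" "piece_len p' > 0"
    using Suc.prems(1) by (rule pieces_SucE)
  obtain q' where q': "q' \<in> set (pieces lam n)" "q \<in> set (refine lam q')" "piece_len q' > 0"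
    using Suc.prems(2) by (rule pieces_SucE)
  show ?case
  proof (cases "p' = q'")
    case True
    then show ?thesis using adjacent_children_comparable[OF lam p'(3,2)] q'(2) Suc.prems(3) by simp
  next
    case False
    have "piece_len p > 0" "piece_len q > 0"
      using child_within[OF p'(3,2)] child_within[OF q'(3,2)] by auto
    then have ends: "piece_right p = piece_right p'" "piece_left q = piece_left q'"
      using pieces_disjoint[OF p'(1) q'(1) False] child_within[OF p'(3,2)] child_within[OF q'(3,2)]
        Suc.prems(3) by (auto simp: piece_len_def)
    then have "p = child3 p'" "q = child0 q'"
      using p'(2,3) q'(2,3) unfolding mem_refine_iff by (auto simp: piece_right_eq)
    moreover have "comparable (slope_ratio lam) p' q'"
      using Suc.IH[OF p'(1) q'(1)] ends Suc.prems(3) by simp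
    ultimately show ?thesis using p'(3) q'(3) by (simp add: comparable_def)
  qed
qed

lemma piece_at_eq_find: "piece_at lam n z = find (\<lambda>p. in_piece p z) (pieces lam n)"
  by (simp add: piece_at_def in_piece_def piece_left_def piece_right_def split_def)

lemma piece_at_Some:
  assumes "p \<in> set (pieces lam n)" "in_piece p z"
  obtains q where "piece_at lam n z = Some q" "q \<in> set (pieces lam n)" "in_piece q z"
proof -
  have "find (\<lambda>p. in_piece p z) (pieces lam n) \<noteq> None"
    using assms unfolding find_None_iff by blast
  then obtain q where q: "find (\<lambda>p. in_piece p z) (pieces lam n) = Some q" by blast
  then have "q \<in> set (pieces lam n)" "in_piece q z" by (auto simp: find_Some_iff)
  with q show ?thesis using that by (simp add: piece_at_eq_find)
qed

lemma Fn_on_piece: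
  assumes "p \<in> set (pieces lam n)" "in_piece p z"
  shows "Fn lam n z = piece_fun p z"
proof -
  obtain q where q: "piece_at lam n z = Some q" "q \<in> set (pieces lam n)" "in_piece q z"
    using assms by (rule piece_at_Some)
  then have "piece_fun q z = piece_fun p z" using pieces_agree assms by blast
  with q(1) show ?thesis
    by (auto simp: Fn_def piece_fun_def piece_slope_def piece_len_def split: prod.splits)
qed

lemma slope_n_on_piece:
  assumes "p \<in> set (pieces lam n)" "piece_left p < x" "x < piece_right p"
  shows "slope_n lam n x = piece_slope p"
proof -
  have x: "in_piece p x" using assms by (simp add: in_piece_def)
  obtain q where q: "piece_at lam n x = Some q" "q \<in> set (pieces lam n)" "in_piece q x"
    using assms(1) x by (rule piece_at_Some)
  have "q = p"
    using pieces_disjoint[OF q(2) assms(1)] q(3) assms(2,3) by (auto simp: in_piece_def)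
  with q(1) show ?thesis
    by (auto simp: slope_n_def piece_slope_def piece_len_def split: prod.splits)
qed

section \<open>Convergence of \<open>Fn\<close>\<close>

lemma pieces_chord_nonneg:
  assumes "p \<in> set (pieces lam n)"
  shows "0 \<le> piece_chord p"
  using pieces_in_unit(3)[OF assms] by (simp add: piece_chord_def)

lemma Fn_Suc_on_piece:
  assumes "0 \<le> lam" "q \<in> set (pieces lam k)" "in_piece q z"
  shows "\<bar>Fn lam (Suc k) z - Fn lam k z\<bar> \<le> lam * piece_chord q"
proof -
  have len: "piece_len q > 0" using assms(2) by (rule pieces_in_unit)
  obtain c where c: "c \<in> set (refine lam q)" "in_piece c z"
    using children_cover[OF len assms(3)] by blast
  have "c \<in> set (pieces lam (Suc k))" using c(1) assms(2) by auto
  then have "Fn lam (Suc k) z - Fn lam k z = lam * piece_chord q * tent q z"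
    using Fn_on_piece c(2) Fn_on_piece[OF assms(2,3)] child_fun[OF len c] by simp
  moreover have "0 \<le> lam * piece_chord q"
    using assms(1) pieces_chord_nonneg[OF assms(2)] by simp
  ultimately show ?thesis
    using tent_bounds[OF len, of z] mult_left_mono[of "tent q z" 1 "lam * piece_chord q"] by simp
qed

lemma descendant_chord_le:
  assumes "1/6 \<le> lam" "p \<in> set (pieces lam n)" "in_piece p z"
  shows "\<exists>q\<in>set (pieces lam (n + j)). in_piece q z \<and> piece_chord q \<le> chord_ratio lam ^ j * piece_chord p"
proof (induction j)
  case 0
  then show ?case using assms(2,3) by auto
next
  case (Suc j)
  then obtain q where q: "q \<in> set (pieces lam (n + j))" "in_piece q z"
    "piece_chord q \<le> chord_ratio lam ^ j * piece_chord p" by blast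
  have len: "piece_len q > 0" using q(1) by (rule pieces_in_unit)
  obtain c where c: "c \<in> set (refine lam q)" "in_piece c z"
    using children_cover[OF len q(2)] by blast
  have "piece_chord c \<le> chord_ratio lam * piece_chord q"
    using child_chord_le[OF assms(1) len c(1)] .
  also have "\<dots> \<le> chord_ratio lam ^ Suc j * piece_chord p"
    using mult_left_mono[OF q(3), of "chord_ratio lam"] assms(1) by (simp add: chord_ratio_def mult.assoc)
  finally show ?case using c q(1) by auto
qed

lemma Fn_increment_le:
  assumes lam: "1/6 \<le> lam" and p: "p \<in> set (pieces lam n)" "in_piece p z"
  shows "\<bar>Fn lam (Suc (n + i)) z - Fn lam (n + i) z\<bar> \<le> lam * chord_ratio lam ^ i * piece_chord p"
proof -
  obtain q where q: "q \<in> set (pieces lam (n + i))" "in_piece q z"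
    "piece_chord q \<le> chord_ratio lam ^ i * piece_chord p"
    using descendant_chord_le[OF lam p] by blast
  have "\<bar>Fn lam (Suc (n + i)) z - Fn lam (n + i) z\<bar> \<le> lam * piece_chord q"
    using lam q(1,2) by (intro Fn_Suc_on_piece) auto
  also have "\<dots> \<le> lam * (chord_ratio lam ^ i * piece_chord p)"
    using q(3) lam by (simp add: mult_left_mono)
  finally show ?thesis by (simp add: mult.assoc)
qed

text \<open>The sum of \<open>lam * chord_ratio lam ^ j\<close> over all \<open>j\<close>; \<open>chord_ratio lam < 1\<close> is exactly \<open>lam < 5/6\<close>.\<close>
definition deviation_factor :: "real \<Rightarrow> real" where
  "deviation_factor lam = lam / (1 - chord_ratio lam)"

lemma deviation_factor_nonneg: "1/6 \<le> lam \<Longrightarrow> lam < 5/6 \<Longrightarrow> 0 \<le> deviation_factor lam"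
  by (simp add: deviation_factor_def chord_ratio_def)

lemma Fn_deviation_le:
  assumes lam: "1/6 \<le> lam" "lam < 5/6" and p: "p \<in> set (pieces lam n)" "in_piece p z"
  shows "\<bar>Fn lam (n + j) z - piece_fun p z\<bar> \<le> deviation_factor lam * piece_chord p"
proof -
  define r where "r = chord_ratio lam"
  have r: "0 \<le> r" "r < 1" using lam by (simp_all add: r_def chord_ratio_def)
  have step: "\<bar>Fn lam (Suc (n + i)) z - Fn lam (n + i) z\<bar> \<le> lam * piece_chord p * r ^ i" for i
    using Fn_increment_le[OF lam(1) p, of i] by (simp add: r_def algebra_simps)
  have geometric: "(\<Sum>i<j. r ^ i) \<le> 1 / (1 - r)"
    using sum_le_suminf[OF summable_geometric, of r "{..<j}"] suminf_geometric[of r] r by simp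
  have "\<bar>Fn lam (n + j) z - Fn lam n z\<bar> = \<bar>\<Sum>i<j. Fn lam (Suc (n + i)) z - Fn lam (n + i) z\<bar>"
    using sum_lessThan_telescope[of "\<lambda>i. Fn lam (n + i) z" j] by simp
  also have "\<dots> \<le> (\<Sum>i<j. \<bar>Fn lam (Suc (n + i)) z - Fn lam (n + i) z\<bar>)"
    by (rule sum_abs)
  also have "\<dots> \<le> (\<Sum>i<j. lam * piece_chord p * r ^ i)"
    by (rule sum_mono) (rule step)
  also have "\<dots> = lam * piece_chord p * (\<Sum>i<j. r ^ i)" by (simp add: sum_distrib_left)
  also have "\<dots> \<le> lam * piece_chord p * (1 / (1 - r))"
    using geometric lam(1) pieces_chord_nonneg[OF p(1)] by (intro mult_left_mono) auto
  finally show ?thesis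
    using Fn_on_piece[OF p] by (simp add: deviation_factor_def r_def)
qed

lemma Fn_convergent:
  assumes lam: "1/6 \<le> lam" "lam < 5/6" and z: "0 \<le> z" "z \<le> 1"
  shows "convergent (\<lambda>k. Fn lam k z)"
proof -
  define r where "r = chord_ratio lam"
  have r: "0 \<le> r" "r < 1" using lam by (simp_all add: r_def chord_ratio_def)
  define root :: piece where "root = (0, 1, 0, 0)"
  have root: "root \<in> set (pieces lam 0)" "in_piece root z" "piece_chord root = 1"
    using z by (simp_all add: root_def in_piece_def piece_chord_def piece_len_def piece_slope_def)
  have step: "norm (Fn lam (Suc i) z - Fn lam i z) \<le> lam * r ^ i" for i
    using Fn_increment_le[OF lam(1) root(1,2), of i] root(3) by (simp add: r_def)
  have "summable (\<lambda>i. Fn lam (Suc i) z - Fn lam i z)"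
  proof (rule summable_comparison_test')
    show "summable (\<lambda>i. lam * r ^ i)" using r by (intro summable_mult summable_geometric) simp
  qed (rule step)
  then have "convergent (\<lambda>k. Fn lam 0 z + (\<Sum>i<k. Fn lam (Suc i) z - Fn lam i z))"
    by (simp add: summable_iff_convergent convergent_add_const_iff)
  then show ?thesis by (simp add: sum_lessThan_telescope[of "\<lambda>i. Fn lam i z"])
qed

lemma Flim_near_piece:
  assumes lam: "1/6 \<le> lam" "lam < 5/6" and p: "p \<in> set (pieces lam n)" "in_piece p z"
  shows "\<bar>Flim lam z - piece_fun p z\<bar> \<le> deviation_factor lam * piece_chord p"
proof -
  have "0 \<le> z" "z \<le> 1" using pieces_in_unit[OF p(1)] p(2) by (auto simp: in_piece_def)
  then have "(\<lambda>k. Fn lam k z) \<longlonglongrightarrow> Flim lam z"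
    using Fn_convergent[OF lam] by (simp add: convergent_LIMSEQ_iff Flim_def)
  then have "(\<lambda>j. \<bar>Fn lam (j + n) z - piece_fun p z\<bar>) \<longlonglongrightarrow> \<bar>Flim lam z - piece_fun p z\<bar>"
    by (intro tendsto_intros LIMSEQ_ignore_initial_segment)
  then show ?thesis
    by (rule LIMSEQ_le_const2) (use Fn_deviation_le[OF lam p] in \<open>auto simp: add.commute\<close>)
qed

section \<open>Coding by digits\<close>

definition digit_ratio :: "nat \<Rightarrow> real" where
  "digit_ratio d = (if d \<in> {0, 3} then 1/3 else 1/6)"

lemma ell_eq_prod: "ell n x = (\<Prod>k<n. digit_ratio (digit k x))"
proof -
  have "{k. k < n \<and> digit k x \<in> {0, 3}} = {..<n} \<inter> {k. digit k x \<in> {0, 3}}"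
    "{k. k < n \<and> digit k x \<in> {1, 2}} = {..<n} \<inter> - {k. digit k x \<in> {0, 3}}"
    by (auto simp: digit_def Umap_def)
  then show ?thesis
    unfolding ell_def beta03_def beta12_def digit_ratio_def prod.If_cases[OF finite_lessThan]
    by simp
qed

lemma digit_Suc: "digit (Suc k) x = digit k (Tmap x)"
  by (simp add: digit_def funpow_Suc_right del: funpow.simps)

lemma ell_Suc: "ell (Suc n) x = digit_ratio (Umap x) * ell n (Tmap x)"
  unfolding ell_eq_prod prod.lessThan_Suc_shift digit_Suc by (simp add: digit_def)

definition piece_interval :: "piece \<Rightarrow> real \<times> real" where
  "piece_interval p = (piece_left p, piece_right p)"

text \<open>The image of an interval under the inverse of \<^const>\<open>Tmap\<close> on the branch of digit \<open>d\<close>;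
  the branch of digit 2 reverses orientation.\<close>
definition branch_image :: "nat \<Rightarrow> real \<times> real \<Rightarrow> real \<times> real" where
  "branch_image d I =
     (if d = 0 then (fst I / 3, snd I / 3)
      else if d = 1 then ((fst I + 2) / 6, (snd I + 2) / 6)
      else if d = 2 then ((4 - snd I) / 6, (4 - fst I) / 6)
      else ((fst I + 2) / 3, (snd I + 2) / 3))"

lemma branch_image_children:
  assumes "piece_interval q = branch_image d (piece_interval p)"
  shows "d \<noteq> 2 \<Longrightarrow> piece_interval (child0 q) = branch_image d (piece_interval (child0 p))"
    "d \<noteq> 2 \<Longrightarrow> piece_interval (child1 lam q) = branch_image d (piece_interval (child1 lam p))"
    "d \<noteq> 2 \<Longrightarrow> piece_interval (child2 lam q) = branch_image d (piece_interval (child2 lam p))"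
    "d \<noteq> 2 \<Longrightarrow> piece_interval (child3 q) = branch_image d (piece_interval (child3 p))"
    "d = 2 \<Longrightarrow> piece_interval (child3 q) = branch_image d (piece_interval (child0 p))"
    "d = 2 \<Longrightarrow> piece_interval (child2 lam q) = branch_image d (piece_interval (child1 lam p))"
    "d = 2 \<Longrightarrow> piece_interval (child1 lam q) = branch_image d (piece_interval (child2 lam p))"
    "d = 2 \<Longrightarrow> piece_interval (child0 q) = branch_image d (piece_interval (child3 p))"
  using assms by (auto simp: piece_interval_def branch_image_def piece_len_def field_simps split: if_splits)

lemma pieces_branch_image:
  assumes "d \<le> 3" "p \<in> set (pieces lam n)"
  shows "\<exists>q\<in>set (pieces lam (Suc n)). piece_interval q = branch_image d (piece_interval p)"
  using assms(2)
proof (induction n arbitrary: p)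
  case 0
  then have "d = 0 \<or> d = 1 \<or> d = 2 \<or> d = 3" "p = (0, 1, 0, 0)" using assms(1) by auto
  then show ?case
    by (auto simp: refine_eq_children piece_interval_def branch_image_def piece_len_def child0_def
        child1_def child2_def child3_def)
next
  case (Suc n)
  obtain p' where p': "p' \<in> set (pieces lam n)" "p \<in> set (refine lam p')" "piece_len p' > 0"
    using Suc.prems by (rule pieces_SucE)
  obtain q' where q': "q' \<in> set (pieces lam (Suc n))" "piece_interval q' = branch_image d (piece_interval p')"
    using Suc.IH[OF p'(1)] by blast
  have "\<exists>c\<in>set (refine lam q'). piece_interval c = branch_image d (piece_interval p)"
    using p'(2) branch_image_children[OF q'(2)] unfolding mem_refine_iff
    by (cases "d = 2") (auto simp: refine_eq_children)
  then show ?case using q'(1) by auto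
qed

text \<open>The closure of the set of points whose first \<open>n\<close> digits are those of \<open>x\<close>.\<close>
primrec cylinder :: "nat \<Rightarrow> real \<Rightarrow> real \<times> real" where
  "cylinder 0 x = (0, 1)"
| "cylinder (Suc n) x = branch_image (Umap x) (cylinder n (Tmap x))"

lemma cylinder_piece: "\<exists>p\<in>set (pieces lam n). piece_interval p = cylinder n x"
proof (induction n arbitrary: x)
  case 0
  then show ?case by (simp add: piece_interval_def)
next
  case (Suc n)
  obtain p where "p \<in> set (pieces lam n)" "piece_interval p = cylinder n (Tmap x)"
    using Suc.IH by blast
  moreover have "Umap x \<le> 3" by (simp add: Umap_def)
  ultimately show ?case using pieces_branch_image by fastforce
qed

lemma Tmap_in_unit: "0 \<le> x \<Longrightarrow> x \<le> 1 \<Longrightarrow> 0 \<le> Tmap x \<and> Tmap x \<le> 1"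
  by (auto simp: Tmap_def)

lemma Tmap_not_in_Eset:
  assumes "x \<notin> Eset"
  shows "Tmap x \<notin> Eset"
proof
  assume "Tmap x \<in> Eset"
  then obtain N where "(\<forall>k\<ge>N. digit k (Tmap x) = 0) \<or> (\<forall>k\<ge>N. digit k (Tmap x) = 3)"
    by (auto simp: Eset_def)
  then have "(\<forall>k\<ge>Suc N. digit k x = 0) \<or> (\<forall>k\<ge>Suc N. digit k x = 3)"
    by (metis Suc_le_D Suc_le_mono digit_Suc)
  with assms show False unfolding Eset_def by blast
qed

lemma endpoints_in_Eset: "0 \<in> Eset" "1 \<in> Eset"
proof -
  have "(Tmap ^^ k) 0 = 0" "(Tmap ^^ k) 1 = 1" for k by (induction k) (auto simp: Tmap_def)
  then show "0 \<in> Eset" "1 \<in> Eset" by (auto simp: Eset_def digit_def Umap_def)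
qed

lemma cylinder_interior:
  assumes "0 \<le> x" "x \<le> 1" "x \<notin> Eset"
  shows "fst (cylinder n x) < x \<and> x < snd (cylinder n x) \<and> snd (cylinder n x) - fst (cylinder n x) = ell n x"
  using assms
proof (induction n arbitrary: x)
  case 0
  then have "x \<noteq> 0" "x \<noteq> 1" using endpoints_in_Eset by auto
  with 0 show ?case by (simp add: ell_eq_prod)
next
  case (Suc n)
  obtain a b where ab: "cylinder n (Tmap x) = (a, b)" by fastforce
  have "a < Tmap x \<and> Tmap x < b \<and> b - a = ell n (Tmap x)"
    using Suc.IH[of "Tmap x"] Tmap_in_unit[OF Suc.prems(1,2)] Tmap_not_in_Eset[OF Suc.prems(3)] ab by auto
  then show ?case
    unfolding cylinder.simps ab ell_Suc
    by (auto simp: branch_image_def Umap_def Tmap_def digit_ratio_def field_simps split: if_splits)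
qed

section \<open>The local estimate\<close>

lemma interior_piece_of_length_ell:
  assumes "0 \<le> x" "x \<le> 1" "x \<notin> Eset"
  obtains P where "P \<in> set (pieces lam n)" "piece_left P < x" "x < piece_right P" "piece_len P = ell n x"
proof -
  obtain P where P: "P \<in> set (pieces lam n)" "piece_interval P = cylinder n x"
    using cylinder_piece by blast
  then have "cylinder n x = (piece_left P, piece_right P)" by (simp add: piece_interval_def)
  with cylinder_interior[OF assms, of n] have
    "piece_left P < x" "x < piece_right P" "piece_len P = ell n x"
    by (auto simp: piece_len_def)
  with P(1) show ?thesis by (rule that)
qed

lemma Flim_diff_within_piece:
  assumes lam: "1/6 \<le> lam" "lam < 5/6"
    and P: "P \<in> set (pieces lam n)" "in_piece P x" "in_piece P y"
  shows "\<bar>Flim lam x - Flim lam y\<bar>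
    \<le> (1 + 2 * deviation_factor lam) * (piece_len P * (\<bar>piece_slope P\<bar> + 1))"
proof -
  define D where "D = deviation_factor lam"
  define W where "W = piece_len P * (\<bar>piece_slope P\<bar> + 1)"
  have len: "0 < piece_len P" using P(1) by (rule pieces_in_unit)
  have "0 \<le> D" using deviation_factor_nonneg[OF lam] by (simp add: D_def)
  moreover have "piece_chord P \<le> W"
    using len sqrt_one_plus_square_bounds(3)[of "piece_slope P"] by (simp add: piece_chord_def W_def)
  ultimately have near: "\<bar>Flim lam z - piece_fun P z\<bar> \<le> D * W" if "in_piece P z" for z
    using Flim_near_piece[OF lam P(1) that] mult_left_mono[of "piece_chord P" W D] by (simp add: D_def)
  have "\<bar>piece_fun P x - piece_fun P y\<bar> = \<bar>piece_slope P\<bar> * \<bar>x - y\<bar>"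
    by (simp add: piece_fun_def abs_mult[symmetric] algebra_simps)
  also have "\<dots> \<le> \<bar>piece_slope P\<bar> * piece_len P"
    using P(2,3) by (intro mult_left_mono) (auto simp: in_piece_def piece_len_def)
  also have "\<dots> \<le> W" using len by (simp add: W_def algebra_simps)
  moreover have "(1 + 2 * D) * W = W + D * W + D * W" by (simp add: algebra_simps)
  ultimately show ?thesis
    using near[OF P(2)] near[OF P(3)] unfolding D_def[symmetric] W_def[symmetric] by linarith
qed

lemma Flim_diff_across_pieces:
  assumes lam: "1/6 \<le> lam" "lam < 5/6"
    and P: "P \<in> set (pieces lam n)" "in_piece P x" "in_piece P z"
    and Q: "Q \<in> set (pieces lam n)" "comparable K P Q" "in_piece Q z" "in_piece Q y"
  shows "\<bar>Flim lam x - Flim lam y\<bar>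
    \<le> (1 + 2 * deviation_factor lam) * (1 + 2 * K) * (piece_len P * (\<bar>piece_slope P\<bar> + 1))"
proof -
  define D where "D = deviation_factor lam"
  define W where "W = piece_len P * (\<bar>piece_slope P\<bar> + 1)"
  have D: "0 \<le> 1 + 2 * D" using deviation_factor_nonneg[OF lam] by (simp add: D_def)
  have "piece_len Q * (\<bar>piece_slope Q\<bar> + 1) \<le> (2 * piece_len P) * (K * (\<bar>piece_slope P\<bar> + 1))"
    using Q(2) pieces_in_unit(3)[OF Q(1)] by (intro mult_mono) (auto simp: comparable_def)
  then have "(1 + 2 * D) * (piece_len Q * (\<bar>piece_slope Q\<bar> + 1)) \<le> (1 + 2 * D) * (2 * K * W)"
    using D by (intro mult_left_mono) (auto simp: W_def algebra_simps)
  then have "\<bar>Flim lam z - Flim lam y\<bar> \<le> (1 + 2 * D) * (2 * K * W)"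
    using Flim_diff_within_piece[OF lam Q(1,3,4)] by (simp add: D_def)
  moreover have "\<bar>Flim lam x - Flim lam z\<bar> \<le> (1 + 2 * D) * W"
    using Flim_diff_within_piece[OF lam P] by (simp add: D_def W_def)
  moreover have "(1 + 2 * D) * (1 + 2 * K) * W = (1 + 2 * D) * W + (1 + 2 * D) * (2 * K * W)"
    by (simp add: algebra_simps)
  ultimately show ?thesis unfolding D_def[symmetric] W_def[symmetric] by linarith
qed

lemma Flim_diff_near_piece:
  assumes lam: "1/6 < lam" "lam < 5/6"
    and P: "P \<in> set (pieces lam n)" "in_piece P x"
    and y: "0 \<le> y" "y \<le> 1" "\<bar>x - y\<bar> \<le> piece_len P / 2"
  shows "\<bar>Flim lam x - Flim lam y\<bar>
    \<le> (1 + 2 * deviation_factor lam) * (1 + 2 * slope_ratio lam) * (piece_len P * (\<bar>piece_slope P\<bar> + 1))"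
proof -
  define K where "K = slope_ratio lam"
  have lam': "1/6 \<le> lam" using lam(1) by simp
  have len: "0 < piece_len P" using P(1) by (rule pieces_in_unit)
  consider "in_piece P y" | "piece_right P < y" | "y < piece_left P" unfolding in_piece_def by linarith
  then show ?thesis
  proof cases
    case 1
    have "comparable K P P"
      using slope_ratio_ge_one[OF lam(1)] len mult_right_mono[of 1 K "\<bar>piece_slope P\<bar> + 1"]
      by (simp add: comparable_def K_def)
    with Flim_diff_across_pieces[OF lam' lam(2) P 1 P(1)] 1 show ?thesis by (simp add: K_def)
  next
    case 2
    obtain Q where Q: "Q \<in> set (pieces lam n)" "piece_left Q = piece_right P"
      using pieces_right_neighbour[OF P(1)] 2 y(2) by auto
    have PQ: "comparable K P Q" using adjacent_pieces_comparable[OF lam(1) P(1) Q(1) Q(2)[symmetric]]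
      by (simp add: K_def)
    have "in_piece Q y"
      using PQ Q(2) P(2) 2 y(3) by (auto simp: comparable_def in_piece_def piece_right_eq[of Q])
    moreover have "in_piece P (piece_right P)" "in_piece Q (piece_right P)"
      using len pieces_in_unit(3)[OF Q(1)] Q(2) by (auto simp: in_piece_def piece_len_def)
    ultimately show ?thesis using Flim_diff_across_pieces[OF lam' lam(2) P _ Q(1) PQ] by (simp add: K_def)
  next
    case 3
    obtain Q where Q: "Q \<in> set (pieces lam n)" "piece_right Q = piece_left P"
      using pieces_left_neighbour[OF P(1)] 3 y(1) by auto
    have PQ: "comparable K P Q" using adjacent_pieces_comparable[OF lam(1) Q(1) P(1) Q(2)]
      by (simp add: K_def comparable_sym)
    have "in_piece Q y"
      using PQ Q(2) P(2) 3 y(3) by (auto simp: comparable_def in_piece_def piece_right_eq[of Q])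
    moreover have "in_piece P (piece_left P)" "in_piece Q (piece_left P)"
      using len pieces_in_unit(3)[OF Q(1)] Q(2) by (auto simp: in_piece_def piece_len_def)
    ultimately show ?thesis using Flim_diff_across_pieces[OF lam' lam(2) P _ Q(1) PQ] by (simp add: K_def)
  qed
qed

theorem proposition3p9:
  fixes lam :: real
  assumes "1/6 < lam" and "lam < 5/6"
  shows "\<exists>C>0. \<forall>n x y. x \<in> {0..1} \<longrightarrow> y \<in> {0..1} \<longrightarrow> x \<notin> Eset \<longrightarrow>
           ell n x / 12 \<le> \<bar>x - y\<bar> \<longrightarrow> \<bar>x - y\<bar> \<le> ell n x / 2 \<longrightarrow>
           \<bar>Flim lam x - Flim lam y\<bar> \<le> C * (\<bar>slope_n lam n x\<bar> + 1) * \<bar>x - y\<bar>"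
proof -
  define A where "A = (1 + 2 * deviation_factor lam) * (1 + 2 * slope_ratio lam)"
  have A: "0 < A"
    using deviation_factor_nonneg[of lam] slope_ratio_ge_one[of lam] assms unfolding A_def
    by (intro mult_pos_pos) auto
  show ?thesis
  proof (intro exI[of _ "12 * A"] conjI allI impI)
    show "0 < 12 * A" using A by simp
    fix n x y
    assume x: "x \<in> {0..1}" and y: "y \<in> {0..1}" and "x \<notin> Eset"
      and lower: "ell n x / 12 \<le> \<bar>x - y\<bar>" and upper: "\<bar>x - y\<bar> \<le> ell n x / 2"
    obtain P where P: "P \<in> set (pieces lam n)" "piece_left P < x" "x < piece_right P"
      "piece_len P = ell n x"
      using interior_piece_of_length_ell x \<open>x \<notin> Eset\<close> by (metis atLeastAtMost_iff)
    have "\<bar>Flim lam x - Flim lam y\<bar> \<le> A * (piece_len P * (\<bar>piece_slope P\<bar> + 1))"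
      using Flim_diff_near_piece[OF assms P(1)] P y upper by (simp add: A_def in_piece_def)
    also have "\<dots> \<le> A * (12 * \<bar>x - y\<bar> * (\<bar>piece_slope P\<bar> + 1))"
      using lower P(4) A by (intro mult_left_mono mult_right_mono) auto
    finally show "\<bar>Flim lam x - Flim lam y\<bar> \<le> 12 * A * (\<bar>slope_n lam n x\<bar> + 1) * \<bar>x - y\<bar>"
      using slope_n_on_piece[OF P(1-3)] by (simp add: algebra_simps)
  qed
qed

end
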